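(* Let $F$ be a continuous distribution function on $[0,\infty)$ with density $f$ whose support is $[0,\infty)$, where $f$ is bounded in a neighbourhood of $0$, differentiable on $(0,\infty)$, and satisfies $$f'\big(F^{-1}(x)\big) \le -\frac{f\big(F^{-1}(x)\big)}{1+F^{-1}(x)} \quad \text{for all } x\in(0,1).$$ Fix $\lambda' \in (0,2]$ and $c \ge 0$. For $q \in [\max(0,\lambda'-1), \lambda'/2]$ let $\tau_b(q) = F^{-1}(1-q)$ and $\tau_a(q) = F^{-1}(1-(\lambda'-q))$ (so $\tau_a(q)\le\tau_b(q)$, user $b$ has feedback probability $q$ and user $a$ has feedback probability $\lambda'-q$, with the convention $F^{-1}(1)=+\infty$), let $Y_a, Y_b$ be independent with distribution function $F$, $\bar Y_a = Y_a\mathbf 1\{Y_a\ge \tau_a(q)\}$, $\bar Y_b = Y_b\mathbf 1\{Y_b\ge\tau_b(q)\}$, and $$\Psi(q\mid c) = \mathbb{E}\big[\log\big(1+\max\{\bar Y_a,\bar Y_b,c\}\big)\big].$$ Then $q \mapsto \Psi(q\mid c)$ is nondecreasing on $[\max(0,\lambda'-1), \lambda'/2]$.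
   Context: Setting: a downlink vector broadcast channel; $Y_a,Y_b$ model the beam-1 SINRs of two distinct users whose total feedback probability $\lambda'$ is held fixed while $q$ moves the two feedback probabilities toward each other ($q=\lambda'/2$ meaning equal probabilities, i.e. equal thresholds). The constant $c$ plays the role of the maximum truncated beam-1 SINR over all other users (independent of $Y_a,Y_b$), so $\Psi(q\mid c)$ is the conditional expected beam-1 rate. $F^{-1}$ is the inverse of $F$ on $[0,\infty)$ (well defined since $F$ is continuous and strictly increasing there). Logarithms are natural. *)

theory Defs
  imports "HOL-Probability.Probability"
begin

definition Finv :: "(real \<Rightarrow> real) \<Rightarrow> real \<Rightarrow> real" where
  "Finv F x = (THE y. 0 \<le> y \<and> F y = x)"

definition Finv_ext :: "(real \<Rightarrow> real) \<Rightarrow> real \<Rightarrow> ereal" where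
  "Finv_ext F x = (if 1 \<le> x then \<infinity> else ereal (Finv F x))"

definition trunc :: "ereal \<Rightarrow> real \<Rightarrow> real" where
  "trunc tau y = (if tau \<le> ereal y then y else 0)"

definition law :: "(real \<Rightarrow> real) \<Rightarrow> real measure" where
  "law f = density lborel (\<lambda>x. ennreal (f x))"

text \<open>The integrand is nonnegative,
  so the expectation is the (possibly infinite) nonnegative integral.\<close>
definition Psi :: "(real \<Rightarrow> real) \<Rightarrow> (real \<Rightarrow> real) \<Rightarrow> real \<Rightarrow> real \<Rightarrow> real \<Rightarrow> ennreal" where
  "Psi F f lam c q =
     (\<integral>\<^sup>+ p. ennreal (ln (1 + max (max (trunc (Finv_ext F (1 - (lam - q))) (fst p))
                                         (trunc (Finv_ext F (1 - q)) (snd p))) c))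
        \<partial>(law f \<Otimes>\<^sub>M law f))"

end

theory Submission
  imports Defs
begin

(*
  Write a = 1 - lam + q and b = 1 - q.  For a level t > 0 the truncated variables satisfy
  P(max(bar Y_a, bar Y_b) < t) = max a (F t) * max b (F t) =: phi a b (F t), so by the layer-cake
  formula for the weight 1/(1+t),
      Psi(q) = ln(1+c) + integral over t > c of (1 - phi a b (F t)) / (1+t).
  Increasing q moves (a, b) to (a2, b2) with a1 <= a2 <= b2 <= b1 and a2 - a1 = b1 - b2.
  The difference D = phi a1 b1 - phi a2 b2 is <= 0 below u0 = a2 b2 / b1 and >= 0 above it
  (single crossing), and its integral over [0,1] is a nonnegative explicit polynomial.
  The hypothesis on f' says that (1+t) f(t) is nonincreasing, i.e. 1/(1+t) = r(t) f(t)
  with r nondecreasing; since F(Y) is uniform, the integral of r(t) f(t) D(F t) is at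
  least r(t0) times the integral of D over [0,1], where F(t0) = u0.  Because the integrals
  may be infinite, this comparison is done in ennreal via the positive and negative parts
  of D.
*)

section \<open>The joint distribution function of two clipped uniforms\<close>

text \<open>phi a b u is the probability that both truncated variables lie below a level t
  with F t = u, when a and b are the probabilities of not being fed back.\<close>
definition phi :: "real \<Rightarrow> real \<Rightarrow> real \<Rightarrow> real" where
  "phi a b u = max a u * max b u"

lemma phi_bounds:
  "0 \<le> a \<Longrightarrow> a \<le> 1 \<Longrightarrow> 0 \<le> b \<Longrightarrow> b \<le> 1 \<Longrightarrow> 0 \<le> u \<Longrightarrow> u \<le> 1 \<Longrightarrow>
   0 \<le> phi a b u \<and> phi a b u \<le> 1"
  unfolding phi_def by (auto intro!: mult_le_one)

lemma phi_borel[measurable]: "phi a b \<in> borel_measurable borel"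
  unfolding phi_def by measurable

lemma phi_cont: "continuous_on S (phi a b)"
  unfolding phi_def by (intro continuous_intros)

lemma phi_integral:
  assumes "0 \<le> a" "a \<le> b" "b \<le> 1"
  shows "(phi a b has_integral (a^2*b/2 + b^3/6 + 1/3)) {0..1}"
proof -
  have i1: "(phi a b has_integral (a*b*a)) {0..a}"
  proof -
    have "((\<lambda>u. a*b) has_integral (a*b*a)) {0..a}"
      using has_integral_const_real[of "a*b" 0 a] assms by (simp add: mult_ac)
    then show ?thesis
      by (rule has_integral_spike[OF negligible_empty, rotated]) (use assms in \<open>auto simp: phi_def\<close>)
  qed
  have i2: "(phi a b has_integral (b*(b^2-a^2)/2)) {a..b}"
  proof -
    have "((\<lambda>u. b*u^2/2) has_real_derivative b*x) (at x within {a..b})" for x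
      by (auto intro!: derivative_eq_intros)
    then have "((\<lambda>u. b*u) has_integral (b*(b^2-a^2)/2)) {a..b}"
      using fundamental_theorem_of_calculus[of a b "\<lambda>u. b*u^2/2" "\<lambda>u. b*u"] assms
      by (auto simp: has_real_derivative_iff_has_vector_derivative[symmetric]
                     right_diff_distrib diff_divide_distrib)
    then show ?thesis
      by (rule has_integral_spike[OF negligible_empty, rotated])
         (use assms in \<open>auto simp: phi_def algebra_simps\<close>)
  qed
  have i3: "(phi a b has_integral ((1 - b^3)/3)) {b..1}"
  proof -
    have "((\<lambda>u. u^3/3) has_real_derivative x^2) (at x within {b..1})" for x
      by (auto intro!: derivative_eq_intros)
    then have "((\<lambda>u. u^2) has_integral ((1 - b^3)/3)) {b..1}"
      using fundamental_theorem_of_calculus[of b 1 "\<lambda>u. u^3/3" "\<lambda>u. u^2"] assms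
      by (auto simp: has_real_derivative_iff_has_vector_derivative[symmetric] diff_divide_distrib)
    then show ?thesis
      by (rule has_integral_spike[OF negligible_empty, rotated])
         (use assms in \<open>auto simp: phi_def algebra_simps power2_eq_square\<close>)
  qed
  have "(phi a b has_integral (a*b*a + b*(b^2-a^2)/2)) {0..b}"
    using has_integral_combine[OF _ _ i1 i2] assms by simp
  then have "(phi a b has_integral (a*b*a + b*(b^2-a^2)/2 + (1 - b^3)/3)) {0..1}"
    using has_integral_combine[OF _ _ _ i3] assms by simp
  moreover have "a*b*a + b*(b^2-a^2)/2 + (1 - b^3)/3 = a^2*b/2 + b^3/6 + 1/3"
    by (simp add: field_simps power2_eq_square power3_eq_cube)
  ultimately show ?thesis by simp
qed

lemma phi_diff_integral:
  assumes "0 \<le> a1" "a1 \<le> a2" "a2 \<le> b2" "b2 \<le> b1" "b1 \<le> 1" "a2 - a1 = b1 - b2"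
  shows "((\<lambda>u. phi a1 b1 u - phi a2 b2 u) has_integral ((b1-a1)^3 - (b2-a2)^3)/12) {0..1}"
proof -
  have "((\<lambda>u. phi a1 b1 u - phi a2 b2 u) has_integral
     ((a1^2*b1/2 + b1^3/6 + 1/3) - (a2^2*b2/2 + b2^3/6 + 1/3))) {0..1}"
    using assms by (intro has_integral_diff phi_integral) auto
  moreover have "(a1^2*b1/2 + b1^3/6 + 1/3) - (a2^2*b2/2 + b2^3/6 + 1/3) = ((b1-a1)^3 - (b2-a2)^3)/12"
  proof -
    have b2: "b2 = a1 + b1 - a2" using assms by simp
    show ?thesis unfolding b2 by (simp add: field_simps power2_eq_square power3_eq_cube)
  qed
  ultimately show ?thesis by (simp only:)
qed

lemma phi_single_crossing:
  assumes "0 \<le> a1" "a1 \<le> a2" "a2 \<le> b2" "b2 \<le> b1" "0 < b1" "a2 - a1 = b1 - b2" "0 \<le> u"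
  shows "u \<le> a2*b2/b1 \<Longrightarrow> phi a1 b1 u \<le> phi a2 b2 u"
    and "a2*b2/b1 \<le> u \<Longrightarrow> phi a2 b2 u \<le> phi a1 b1 u"
proof -
  have "a2*b2 - a1*b1 = (a2-a1)*(b2-a1)"
    using assms(6) by (simp add: algebra_simps) (smt (verit) mult.commute right_diff_distrib')
  then have key: "a1*b1 \<le> a2*b2" using assms by (smt (verit) mult_nonneg_nonneg)
  have u0: "a2*b2/b1 \<le> a2" using assms by (simp add: divide_le_eq mult_left_mono)
  show "phi a1 b1 u \<le> phi a2 b2 u" if u: "u \<le> a2*b2/b1"
  proof -
    have ua: "u \<le> a2" using u u0 by linarith
    have "u*b1 \<le> a2*b2" using u assms by (simp add: le_divide_eq)
    then have "max a1 u * b1 \<le> a2*b2" using key by (auto simp: max_def)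
    moreover have "phi a2 b2 u = a2*b2" using ua assms by (simp add: phi_def max_def)
    moreover have "phi a1 b1 u = max a1 u * b1" using ua assms by (simp add: phi_def max_def)
    ultimately show ?thesis by simp
  qed
  show "phi a2 b2 u \<le> phi a1 b1 u" if u: "a2*b2/b1 \<le> u"
  proof (cases "u \<le> a2")
    case True
    have "a2*b2 \<le> u*b1" using u assms by (simp add: divide_le_eq)
    also have "\<dots> \<le> max a1 u * max b1 u" using assms by (intro mult_mono) auto
    finally have "a2*b2 \<le> phi a1 b1 u" by (simp add: phi_def)
    moreover have "phi a2 b2 u = a2*b2" using True assms by (simp add: phi_def max_def)
    ultimately show ?thesis by simp
  next
    case False
    have "u * max b2 u \<le> max a1 u * max b1 u" using assms by (intro mult_mono) auto
    then show ?thesis using False by (simp add: phi_def max_def)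
  qed
qed

lemma phi_neg_part_le_pos_part:
  assumes "0 \<le> a1" "a1 \<le> a2" "a2 \<le> b2" "b2 \<le> b1" "b1 \<le> 1" "a2 - a1 = b1 - b2"
  shows "integral {0..1} (\<lambda>u. max 0 (phi a2 b2 u - phi a1 b1 u))
           \<le> integral {0..1} (\<lambda>u. max 0 (phi a1 b1 u - phi a2 b2 u))"
proof -
  define Dn where "Dn = (\<lambda>u. max 0 (phi a2 b2 u - phi a1 b1 u))"
  define Dp where "Dp = (\<lambda>u. max 0 (phi a1 b1 u - phi a2 b2 u))"
  have "continuous_on {0..1} Dn" "continuous_on {0..1} Dp"
    unfolding Dn_def Dp_def by (intro continuous_intros phi_cont)+
  then have Dn: "(Dn has_integral integral {0..1} Dn) {0..1}"
    and Dp: "(Dp has_integral integral {0..1} Dp) {0..1}"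
    by (simp_all add: integrable_integral integrable_continuous_real)
  have "(\<lambda>u. Dp u - Dn u) = (\<lambda>u. phi a1 b1 u - phi a2 b2 u)"
    by (auto simp: fun_eq_iff max_def Dn_def Dp_def)
  then have "((\<lambda>u. phi a1 b1 u - phi a2 b2 u) has_integral (integral {0..1} Dp - integral {0..1} Dn)) {0..1}"
    using has_integral_diff[OF Dp Dn] by simp
  then have "integral {0..1} Dp - integral {0..1} Dn = ((b1-a1)^3 - (b2-a2)^3)/12"
    using phi_diff_integral[OF assms] by (rule has_integral_unique)
  moreover have "(b2-a2)^3 \<le> (b1-a1)^3" using assms by (intro power_mono) auto
  ultimately have "integral {0..1} Dn \<le> integral {0..1} Dp" by simp
  then show ?thesis by (simp only: Dn_def Dp_def)
qed

section \<open>The layer-cake formula for the logarithmic rate\<close>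

text \<open>The density of ln(1+t) restricted to levels above c.\<close>
definition wt :: "real \<Rightarrow> real \<Rightarrow> real" where
  "wt c t = (if c < t then 1 / (1+t) else 0)"

lemma wt_nonneg: "0 \<le> c \<Longrightarrow> 0 \<le> wt c t"
  by (simp add: wt_def)

lemma wt_borel[measurable]: "wt c \<in> borel_measurable borel"
  unfolding wt_def by measurable

lemma ln_layer:
  assumes c: "0 \<le> c"
  shows "ennreal (ln (1 + max s c)) =
           ennreal (ln (1+c)) + (\<integral>\<^sup>+t. ennreal (wt c t) * indicator {..s} t \<partial>lborel)"
proof (cases "s \<le> c")
  case True
  have "ennreal (wt c t) * indicator {..s} t = 0" for t
    using True by (auto simp: wt_def indicator_def)
  then have "(\<integral>\<^sup>+t. ennreal (wt c t) * indicator {..s} t \<partial>lborel) = 0"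
    by (simp only:) simp
  then show ?thesis using True by (simp add: max_def)
next
  case False
  have "((\<lambda>t. ln (1+t)) has_real_derivative 1/(1+x)) (at x within {c..s})" if "x \<in> {c..s}" for x
    using that c by (auto intro!: derivative_eq_intros simp: divide_inverse)
  then have "((\<lambda>t. 1/(1+t)) has_integral (ln (1+s) - ln (1+c))) {c..s}"
    using fundamental_theorem_of_calculus[of c s "\<lambda>t. ln (1+t)" "\<lambda>t. 1/(1+t)"] False
    by (auto simp: has_real_derivative_iff_has_vector_derivative[symmetric])
  moreover have "((\<lambda>t. 1/(1+t)) has_integral (ln (1+s) - ln (1+c))) {c..s} \<longleftrightarrow>
        ((\<lambda>t. 1/(1+t)) has_integral (ln (1+s) - ln (1+c))) {c<..s}"
    by (rule has_integral_spike_set_eq; rule negligible_subset[of "{c}"]) auto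
  ultimately have int: "((\<lambda>t. 1/(1+t)) has_integral (ln (1+s) - ln (1+c))) {c<..s}"
    by blast
  have "(\<integral>\<^sup>+t. ennreal (wt c t) * indicator {..s} t \<partial>lborel) =
        (\<integral>\<^sup>+t. ennreal (1/(1+t)) * indicator {c<..s} t \<partial>lborel)"
    by (intro nn_integral_cong) (auto simp: wt_def indicator_def)
  also have "\<dots> = ennreal (ln (1+s) - ln (1+c))"
    by (rule nn_integral_has_integral_lebesgue'[OF _ int]) (use c in auto)
  finally have "(\<integral>\<^sup>+t. ennreal (wt c t) * indicator {..s} t \<partial>lborel) =
                  ennreal (ln (1+s) - ln (1+c))" .
  moreover have "ennreal (ln (1 + max s c)) = ennreal (ln (1+c)) + ennreal (ln (1+s) - ln (1+c))"
    using False c by (simp add: max_def flip: ennreal_plus)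
  ultimately show ?thesis by simp
qed

lemma expected_ln_layer_cake:
  assumes M: "prob_space M" and c: "0 \<le> c" and X[measurable]: "X \<in> borel_measurable M"
  shows "(\<integral>\<^sup>+x. ennreal (ln (1 + max (X x) c)) \<partial>M) =
     ennreal (ln (1+c)) + (\<integral>\<^sup>+t. ennreal (wt c t) * emeasure M {x \<in> space M. t \<le> X x} \<partial>lborel)"
proof -
  interpret prob_space M by (rule M)
  interpret Mlborel: pair_sigma_finite M lborel
    by (intro pair_sigma_finite.intro prob_space_imp_sigma_finite M lborel.sigma_finite_measure_axioms)
  have G[measurable]: "(\<lambda>(x, t). ennreal (wt c t) * indicator {..X x} t) \<in> borel_measurable (M \<Otimes>\<^sub>M lborel)"
  proof -
    have "(\<lambda>(x, t). ennreal (wt c t) * indicator {..X x} t) =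
          (\<lambda>p. ennreal (wt c (snd p)) * (if snd p \<le> X (fst p) then 1 else 0))"
      by (auto simp: fun_eq_iff indicator_def)
    also have "\<dots> \<in> borel_measurable (M \<Otimes>\<^sub>M lborel)" by measurable
    finally show ?thesis .
  qed
  have "(\<integral>\<^sup>+x. ennreal (ln (1 + max (X x) c)) \<partial>M) =
        (\<integral>\<^sup>+x. ennreal (ln (1+c)) + (\<integral>\<^sup>+t. ennreal (wt c t) * indicator {..X x} t \<partial>lborel) \<partial>M)"
    by (intro nn_integral_cong ln_layer c)
  also have "\<dots> = ennreal (ln (1+c)) + (\<integral>\<^sup>+x. (\<integral>\<^sup>+t. ennreal (wt c t) * indicator {..X x} t \<partial>lborel) \<partial>M)"
    using lborel.borel_measurable_nn_integral[OF G]
    by (subst nn_integral_add) (auto simp: emeasure_space_1)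
  also have "(\<integral>\<^sup>+x. (\<integral>\<^sup>+t. ennreal (wt c t) * indicator {..X x} t \<partial>lborel) \<partial>M) =
             (\<integral>\<^sup>+t. (\<integral>\<^sup>+x. ennreal (wt c t) * indicator {..X x} t \<partial>M) \<partial>lborel)"
    by (rule Mlborel.Fubini'[symmetric]) (use G in simp)
  also have "\<dots> = (\<integral>\<^sup>+t. ennreal (wt c t) * emeasure M {x \<in> space M. t \<le> X x} \<partial>lborel)"
  proof (intro nn_integral_cong)
    fix t
    have "(\<integral>\<^sup>+x. ennreal (wt c t) * indicator {..X x} t \<partial>M) =
          (\<integral>\<^sup>+x. ennreal (wt c t) * indicator {x \<in> space M. t \<le> X x} x \<partial>M)"
      by (intro nn_integral_cong) (auto simp: indicator_def)
    also have "\<dots> = ennreal (wt c t) * emeasure M {x \<in> space M. t \<le> X x}"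
      by (rule nn_integral_cmult_indicator) simp
    finally show "(\<integral>\<^sup>+x. ennreal (wt c t) * indicator {..X x} t \<partial>M) =
                    ennreal (wt c t) * emeasure M {x \<in> space M. t \<le> X x}" .
  qed
  finally show ?thesis .
qed

lemma emeasure_pair_max_ge:
  fixes t :: real
  assumes M: "prob_space M" and N: "prob_space N"
    and [measurable]: "g \<in> borel_measurable M" "h \<in> borel_measurable N"
  shows "emeasure (M \<Otimes>\<^sub>M N) {p \<in> space (M \<Otimes>\<^sub>M N). t \<le> max (g (fst p)) (h (snd p))} =
         ennreal (1 - measure M {x \<in> space M. g x < t} * measure N {y \<in> space N. h y < t})"
proof -
  interpret M: prob_space M by (rule M)
  interpret N: prob_space N by (rule N)
  interpret MN: pair_prob_space M N ..
  let ?X = "{x \<in> space M. g x < t}" and ?Y = "{y \<in> space N. h y < t}"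
  have XY: "?X \<in> sets M" "?Y \<in> sets N" by simp_all
  have "{p \<in> space (M \<Otimes>\<^sub>M N). t \<le> max (g (fst p)) (h (snd p))} = space (M \<Otimes>\<^sub>M N) - ?X \<times> ?Y"
    by (auto simp: space_pair_measure not_le)
  moreover have "MN.prob (space (M \<Otimes>\<^sub>M N) - ?X \<times> ?Y) = 1 - MN.prob (?X \<times> ?Y)"
    using XY by (intro MN.prob_compl pair_measureI) auto
  moreover have "MN.prob (?X \<times> ?Y) = M.prob ?X * N.prob ?Y"
    using N.emeasure_pair_measure_Times[OF XY]
    by (simp add: M.emeasure_eq_measure N.emeasure_eq_measure MN.emeasure_eq_measure
                  ennreal_mult[symmetric])
  ultimately show ?thesis by (simp add: MN.emeasure_eq_measure)
qed

section \<open>Distribution functions with a density\<close>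

lemma sets_law[simp, measurable_cong]: "sets (law g) = sets borel"
  by (simp add: law_def)

lemma space_law[simp]: "space (law g) = UNIV"
  by (simp add: law_def)

lemma trunc_borel[measurable]: "trunc \<tau> \<in> borel_measurable borel"
  unfolding trunc_def by measurable

locale cdf_density =
  fixes F f :: "real \<Rightarrow> real"
  assumes f_nonneg: "\<And>x. 0 \<le> f x"
    and f_neg: "\<And>x. x < 0 \<Longrightarrow> f x = 0"
    and F_density: "\<And>x. (f has_integral F x) {..x}"
    and F_cont: "continuous_on UNIV F"
    and F_lim: "(F \<longlongrightarrow> 1) at_top"
    and f_support: "closure {x. f x \<noteq> 0} = {0..}"
    and f_cont_pos: "\<And>x. 0 < x \<Longrightarrow> isCont f x"
begin

text \<open>f is continuous off 0, hence Borel measurable.\<close>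
lemma f_borel[measurable]: "f \<in> borel_measurable borel"
proof (rule borel_measurable_continuous_countable_exceptions[of "{0}"])
  show "continuous_on (- {0}) f"
  proof (intro continuous_at_imp_continuous_on ballI)
    fix x :: real assume "x \<in> - {0}"
    show "isCont f x"
    proof (cases "x < 0")
      case True
      have "\<forall>\<^sub>F y in nhds x. f y = 0"
        using eventually_nhds_in_open[of "{..<0}" x] True f_neg by (auto elim!: eventually_mono)
      then show ?thesis by (simp add: isCont_cong)
    next
      case False
      then show ?thesis using \<open>x \<in> - {0}\<close> f_cont_pos by simp
    qed
  qed
qed simp

lemma F_borel[measurable]: "F \<in> borel_measurable borel"
  using F_cont by (rule borel_measurable_continuous_onI)

lemma F_nonneg: "0 \<le> F x"
  using has_integral_nonneg[OF F_density] f_nonneg by auto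

lemma F_mono: "x \<le> y \<Longrightarrow> F x \<le> F y"
  by (rule has_integral_subset_le[OF _ F_density F_density]) (auto simp: f_nonneg)

lemma F_le1: "F x \<le> 1"
  using F_lim
  by (rule tendsto_lowerbound) (auto simp: eventually_at_top_linorder intro!: exI[of _ x] F_mono)

lemma F_nonpos: "x \<le> 0 \<Longrightarrow> F x = 0"
proof -
  assume "x \<le> 0"
  have "(f has_integral 0) {..x}"
    by (rule has_integral_spike[OF negligible_sing[of 0] _ has_integral_0]) (use \<open>x \<le> 0\<close> f_neg in auto)
  then show ?thesis using F_density has_integral_unique by blast
qed

lemma emeasure_law: "A \<in> sets borel \<Longrightarrow> emeasure (law f) A = (\<integral>\<^sup>+x. ennreal (f x) * indicator A x \<partial>lborel)"
  unfolding law_def by (subst emeasure_density) auto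

lemma emeasure_law_Iic: "emeasure (law f) {..x} = ennreal (F x)"
  by (simp add: emeasure_law nn_integral_has_integral_lebesgue'[OF _ F_density] f_nonneg)

lemma emeasure_law_Iio: "emeasure (law f) {..<x} = ennreal (F x)"
proof -
  have "(f has_integral F x) {..x} \<longleftrightarrow> (f has_integral F x) {..<x}"
    by (rule has_integral_spike_set_eq; rule negligible_subset[of "{x}"]) auto
  then have "(f has_integral F x) {..<x}" using F_density by blast
  then show ?thesis by (simp add: emeasure_law nn_integral_has_integral_lebesgue' f_nonneg)
qed

lemma measure_law_Iic: "measure (law f) {..x} = F x"
  using emeasure_law_Iic[of x] F_nonneg[of x] by (simp add: measure_def)

lemma measure_law_Iio: "measure (law f) {..<x} = F x"
  using emeasure_law_Iio[of x] F_nonneg[of x] by (simp add: measure_def)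

lemma prob_space_law: "prob_space (law f)"
proof
  have "(SUP n. emeasure (law f) {..real n}) = emeasure (law f) (\<Union>n. {..real n})"
    by (rule SUP_emeasure_incseq) (auto simp: incseq_def)
  also have "(\<Union>n. {..real n}) = UNIV"
    by (auto intro: real_arch_simple)
  finally have eq: "emeasure (law f) UNIV = (SUP n. ennreal (F (real n)))"
    by (simp add: emeasure_law_Iic)
  have "(\<lambda>n. ennreal (F (real n))) \<longlonglongrightarrow> ennreal 1"
    by (intro tendsto_ennrealI F_lim[THEN filterlim_compose] filterlim_real_sequentially)
  moreover have "(\<lambda>n. ennreal (F (real n))) \<longlonglongrightarrow> (SUP n. ennreal (F (real n)))"
    by (rule LIMSEQ_SUP) (auto simp: incseq_def intro!: ennreal_leI F_mono)
  ultimately have "(SUP n. ennreal (F (real n))) = 1"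
    using LIMSEQ_unique by fastforce
  then show "emeasure (law f) (space (law f)) = 1" using eq by simp
qed

text \<open>Since the support of f is [0,oo) and f is continuous there, F is strictly increasing
  on [0,oo): between any two points lies a small interval on which f stays above half of
  a positive value.\<close>
lemma F_strict: assumes "0 \<le> x" "x < y" shows "F x < F y"
proof -
  have "(x+y)/2 \<in> {x<..<y} \<inter> closure {x. f x \<noteq> 0}"
    using assms by (simp add: f_support)
  then have "{x<..<y} \<inter> closure {x. f x \<noteq> 0} \<noteq> {}" by blast
  then obtain z where z: "x < z" "z < y" "f z \<noteq> 0"
    using open_Int_closure_eq_empty[of "{x<..<y}" "{x. f x \<noteq> 0}"] by auto
  have fz: "0 < f z" using z f_nonneg[of z] by auto
  have "isCont f z" using z assms by (intro f_cont_pos) auto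
  then obtain d where d: "d > 0" "\<And>w. dist w z < d \<Longrightarrow> dist (f w) (f z) < f z / 2"
    using fz unfolding continuous_at_eps_delta by (metis half_gt_zero)
  define e where "e = min d (min (z - x) (y - z)) / 2"
  have "min d (min (z - x) (y - z)) \<le> z - x" "min d (min (z - x) (y - z)) \<le> y - z"
    "min d (min (z - x) (y - z)) \<le> d" "0 < min d (min (z - x) (y - z))" using d z by auto
  then have e: "e > 0" "e < d" "x < z - e" "z + e \<le> y"
    unfolding e_def by linarith+
  have fge: "f z / 2 \<le> f w" if "w \<in> {z-e..z+e}" for w
  proof -
    have "dist w z < d" using that e by (auto simp: dist_real_def)
    from d(2)[OF this] show ?thesis by (auto simp: dist_real_def abs_if split: if_splits)
  qed
  have "ennreal (f z / 2) * ennreal (2*e) = (\<integral>\<^sup>+w. ennreal (f z / 2) * indicator {z-e..z+e} w \<partial>lborel)"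
    using e by (simp add: nn_integral_cmult_indicator)
  also have "\<dots> \<le> (\<integral>\<^sup>+w. ennreal (f w) * indicator {z-e..z+e} w \<partial>lborel)"
    by (intro nn_integral_mono) (auto simp: indicator_def intro!: ennreal_leI fge)
  also have "\<dots> = emeasure (law f) {z-e..z+e}" by (simp add: emeasure_law)
  finally have mass: "ennreal (f z * e) \<le> emeasure (law f) {z-e..z+e}"
    using fz e by (simp add: ennreal_mult'[symmetric] mult_ac)
  have "emeasure (law f) {..x} + emeasure (law f) {z-e..z+e} = emeasure (law f) ({..x} \<union> {z-e..z+e})"
    using e by (intro plus_emeasure) auto
  also have "\<dots> \<le> emeasure (law f) {..y}"
    using e by (intro emeasure_mono) auto
  finally have "ennreal (F x) + ennreal (f z * e) \<le> ennreal (F y)"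
    using mass by (simp add: emeasure_law_Iic) (meson add_left_mono order_trans)
  then have "F x + f z * e \<le> F y"
    using fz e F_nonneg by (simp flip: ennreal_plus)
  then show ?thesis using fz e by (smt (verit) mult_pos_pos)
qed

lemma F_less1: "F x < 1"
proof (cases "x < 0")
  case True then show ?thesis using F_nonpos by simp
next
  case False then show ?thesis using F_strict[of x "x+1"] F_le1[of "x+1"] by simp
qed

lemma F_pos: "0 < x \<Longrightarrow> 0 < F x"
  using F_strict[of 0 x] F_nonpos[of 0] by simp

lemma F_le_iff: "0 \<le> x \<Longrightarrow> 0 \<le> y \<Longrightarrow> F x \<le> F y \<longleftrightarrow> x \<le> y"
  using F_strict[of y x] F_mono[of x y] by linarith

lemma Finv: assumes "0 \<le> u" "u < 1" shows "0 \<le> Finv F u" "F (Finv F u) = u"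
proof -
  have "\<forall>\<^sub>F x in at_top. u < F x"
    using F_lim assms(2) by (rule order_tendstoD)
  then obtain b where b: "\<And>x. x \<ge> b \<Longrightarrow> u < F x" by (auto simp: eventually_at_top_linorder)
  have "\<exists>x. 0 \<le> x \<and> x \<le> max 0 b \<and> F x = u"
    using b[of "max 0 b"] assms F_nonpos[of 0]
    by (intro IVT' continuous_on_subset[OF F_cont]) auto
  then obtain y where y: "0 \<le> y" "F y = u" by blast
  have "z = y" if "0 \<le> z" "F z = u" for z
    using F_le_iff[of z y] F_le_iff[of y z] that y by auto
  then have "\<exists>!y. 0 \<le> y \<and> F y = u" using y by blast
  from theI'[OF this] show "0 \<le> Finv F u" "F (Finv F u) = u" by (auto simp: Finv_def)
qed

lemma Finv_F: assumes "0 \<le> y" shows "Finv F (F y) = y"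
  unfolding Finv_def
proof (rule the_equality)
  fix z assume "0 \<le> z \<and> F z = F y"
  then have z: "0 \<le> z" "F z = F y" by simp_all
  have "z \<le> y" using F_le_iff[OF z(1) assms] z(2) by simp
  moreover have "y \<le> z" using F_le_iff[OF assms z(1)] z(2) by simp
  ultimately show "z = y" by simp
qed (use assms in simp)

lemma cdf_distr_law_F: "cdf (distr (law f) borel F) x = (if x < 0 then 0 else if x < 1 then x else 1)"
proof -
  interpret prob_space "law f" by (rule prob_space_law)
  have eq: "cdf (distr (law f) borel F) x = measure (law f) (F -` {..x})"
    by (simp add: cdf_def measure_distr)
  consider "x < 0" | "0 \<le> x" "x < 1" | "1 \<le> x" by linarith
  then show ?thesis
  proof cases
    case 1
    have "\<not> F y \<le> x" for y using F_nonneg[of y] 1 by linarith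
    then have "F -` {..x} = {}" by auto
    then show ?thesis using eq 1 by simp
  next
    case 2
    have "F y \<le> x \<longleftrightarrow> y \<le> Finv F x" for y
    proof (cases "y < 0")
      case True then show ?thesis using F_nonpos[of y] Finv[of x] 2 by simp
    next
      case False then show ?thesis using F_le_iff[of y "Finv F x"] Finv[of x] 2 by simp
    qed
    then have "F -` {..x} = {..Finv F x}" by auto
    then show ?thesis using eq 2 Finv[of x] measure_law_Iic by simp
  next
    case 3
    have "F y \<le> x" for y using F_le1[of y] 3 by linarith
    then have "F -` {..x} = UNIV" by auto
    then show ?thesis using eq 3 prob_space by simp
  qed
qed

lemma cdf_uniform: "cdf (density lborel (indicator {0..1})) x = (if x < 0 then 0 else if x < 1 then x else 1)"
proof -
  have "cdf (density lborel (indicator {0..1})) x = measure lborel ({0..1} \<inter> {..x})"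
    by (simp add: cdf_def measure_def emeasure_density indicator_inter_arith[symmetric]
                  nn_integral_indicator mult.commute Int_commute)
  also have "{0..1} \<inter> {..x} = (if x < 0 then {} else if x < 1 then {0..x} else {0..1::real})"
    by auto
  finally show ?thesis by simp
qed

lemma distr_law_F: "distr (law f) borel F = density lborel (indicator {0..1})"
proof (rule cdf_unique)
  interpret prob_space "law f" by (rule prob_space_law)
  show "real_distribution (distr (law f) borel F)"
    by (simp add: real_distribution_def real_distribution_axioms_def prob_space_distr)
  have "prob_space (density lborel (indicator {0..1::real}))"
    by (rule prob_spaceI) (simp add: emeasure_density nn_integral_indicator)
  then show "real_distribution (density lborel (indicator {0..1::real}))"
    by (simp add: real_distribution_def real_distribution_axioms_def)
  show "cdf (distr (law f) borel F) = cdf (density lborel (indicator {0..1}))"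
    by (simp add: fun_eq_iff cdf_distr_law_F cdf_uniform)
qed

lemma nn_integral_density_F:
  assumes [measurable]: "g \<in> borel_measurable borel"
  shows "(\<integral>\<^sup>+t. ennreal (f t) * g (F t) \<partial>lborel) = (\<integral>\<^sup>+u. g u * indicator {0..1} u \<partial>lborel)"
proof -
  have "(\<integral>\<^sup>+t. ennreal (f t) * g (F t) \<partial>lborel) = (\<integral>\<^sup>+t. g (F t) \<partial>law f)"
    unfolding law_def by (subst nn_integral_density) auto
  also have "\<dots> = (\<integral>\<^sup>+u. g u \<partial>distr (law f) borel F)"
    by (subst nn_integral_distr) auto
  also have "\<dots> = (\<integral>\<^sup>+u. g u * indicator {0..1} u \<partial>lborel)"
    by (simp add: distr_law_F nn_integral_density mult.commute)
  finally show ?thesis .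
qed

lemma nn_integral_density_F_real:
  assumes "\<And>u. 0 \<le> D u" "D \<in> borel_measurable borel" "(D has_integral I) {0..1}"
  shows "(\<integral>\<^sup>+t. ennreal (f t * D (F t)) \<partial>lborel) = ennreal I"
proof -
  have "(\<integral>\<^sup>+t. ennreal (f t * D (F t)) \<partial>lborel) = (\<integral>\<^sup>+t. ennreal (f t) * ennreal (D (F t)) \<partial>lborel)"
    using f_nonneg by (simp add: ennreal_mult')
  also have "\<dots> = (\<integral>\<^sup>+u. ennreal (D u) * indicator {0..1} u \<partial>lborel)"
    using assms(2) by (intro nn_integral_density_F) simp
  also have "\<dots> = ennreal I"
    by (rule nn_integral_has_integral_lebesgue'[OF _ assms(3)]) (use assms(1) in simp)
  finally show ?thesis .
qed

section \<open>The rate as an integral of tail probabilities\<close>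

lemma measure_trunc_less:
  assumes t: "0 < t"
  shows "measure (law f) {y. trunc (ereal r) y < t} = max (F r) (F t)"
    and "measure (law f) {y. trunc \<infinity> y < t} = 1"
proof -
  have "{y. trunc (ereal r) y < t} = {..<max r t}" using t by (auto simp: trunc_def)
  moreover have "F (max r t) = max (F r) (F t)"
    using F_mono[of r t] F_mono[of t r] by (cases "r \<le> t") (simp_all add: max_def)
  ultimately show "measure (law f) {y. trunc (ereal r) y < t} = max (F r) (F t)"
    by (simp add: measure_law_Iio)
  have "{y. trunc \<infinity> y < t} = space (law f)" using t by (auto simp: trunc_def)
  then show "measure (law f) {y. trunc \<infinity> y < t} = 1"
    using prob_space.prob_space[OF prob_space_law] by simp
qed

lemma Psi_formula:
  assumes lam: "0 < lam" "lam \<le> 2" and c: "0 \<le> c" and q: "max 0 (lam-1) \<le> q" "q \<le> lam/2"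
  shows "Psi F f lam c q =
           ennreal (ln (1+c)) + (\<integral>\<^sup>+t. ennreal (wt c t * (1 - phi (1-lam+q) (1-q) (F t))) \<partial>lborel)"
proof -
  let ?A = "Finv_ext F (1 - (lam - q))" and ?B = "Finv_ext F (1 - q)"
  let ?M = "\<lambda>p. max (trunc ?A (fst p)) (trunc ?B (snd p))"
  let ?P = "law f \<Otimes>\<^sub>M law f"
  have P: "prob_space ?P" by (intro prob_space_pair prob_space_law)
  have "Psi F f lam c q = (\<integral>\<^sup>+p. ennreal (ln (1 + max (?M p) c)) \<partial>?P)"
    by (simp add: Psi_def)
  also have "\<dots> = ennreal (ln (1+c)) + (\<integral>\<^sup>+t. ennreal (wt c t) * emeasure ?P {p \<in> space ?P. t \<le> ?M p} \<partial>lborel)"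
    by (rule expected_ln_layer_cake[OF P c]) measurable
  also have "(\<integral>\<^sup>+t. ennreal (wt c t) * emeasure ?P {p \<in> space ?P. t \<le> ?M p} \<partial>lborel) =
             (\<integral>\<^sup>+t. ennreal (wt c t * (1 - phi (1-lam+q) (1-q) (F t))) \<partial>lborel)"
  proof (intro nn_integral_cong)
    fix t
    show "ennreal (wt c t) * emeasure ?P {p \<in> space ?P. t \<le> ?M p} =
            ennreal (wt c t * (1 - phi (1-lam+q) (1-q) (F t)))"
    proof (cases "c < t")
      case False then show ?thesis by (simp add: wt_def)
    next
      case True
      then have t: "0 < t" using c by simp
      have a: "0 \<le> 1 - (lam - q)" "1 - (lam - q) < 1" using lam q by auto
      then have mA: "measure (law f) {y. trunc ?A y < t} = max (1-lam+q) (F t)"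
        using measure_trunc_less(1)[OF t] Finv(2)[OF a] by (simp add: Finv_ext_def)
      have mB: "measure (law f) {y. trunc ?B y < t} = max (1-q) (F t)"
      proof (cases "q = 0")
        case True
        then show ?thesis using measure_trunc_less(2)[OF t] F_le1[of t] by (simp add: Finv_ext_def)
      next
        case False
        then have b: "0 \<le> 1 - q" "1 - q < 1" using lam q by auto
        then show ?thesis using measure_trunc_less(1)[OF t] Finv(2)[OF b] by (simp add: Finv_ext_def)
      qed
      have "emeasure ?P {p \<in> space ?P. t \<le> ?M p} = ennreal (1 - phi (1-lam+q) (1-q) (F t))"
        using emeasure_pair_max_ge[OF prob_space_law prob_space_law, of "trunc ?A" "trunc ?B" t] mA mB
        by (simp add: phi_def)
      then show ?thesis using wt_nonneg[OF c, of t] by (simp add: ennreal_mult')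
    qed
  qed
  finally show ?thesis .
qed

text \<open>The hypothesis on f' at the quantiles F^-1(x) says exactly that (1+t) f(t) has
  nonpositive derivative on (0,oo), so it is nonincreasing there.\<close>
lemma weighted_density_antimono_of_deriv:
  assumes f_diff: "\<And>x. 0 < x \<Longrightarrow> f differentiable (at x)"
    and f_cond: "\<And>x. 0 < x \<Longrightarrow> x < 1 \<Longrightarrow> deriv f (Finv F x) \<le> - f (Finv F x) / (1 + Finv F x)"
    and "0 < s" "s \<le> t"
  shows "(1+t) * f t \<le> (1+s) * f s"
proof (rule DERIV_nonpos_imp_nonincreasing[OF \<open>s \<le> t\<close>])
  fix x assume "s \<le> x" "x \<le> t"
  then have x: "0 < x" using \<open>0 < s\<close> by auto
  have D: "(f has_real_derivative deriv f x) (at x)"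
    using f_diff[OF x] by (simp add: DERIV_deriv_iff_real_differentiable)
  have "deriv f x \<le> - f x / (1 + x)"
    using f_cond[of "F x"] F_pos[OF x] F_less1[of x] Finv_F[of x] x by simp
  then have "f x + (1+x) * deriv f x \<le> 0"
    using x by (simp add: field_simps)
  moreover have "((\<lambda>x. (1+x) * f x) has_real_derivative (f x + (1+x) * deriv f x)) (at x)"
    using D by (auto intro!: derivative_eq_intros)
  ultimately show "\<exists>y. ((\<lambda>x. (1+x) * f x) has_real_derivative y) (at x) \<and> y \<le> 0"
    by blast
qed

end

section \<open>Comparison under a nonincreasing weighted density\<close>

locale weighted_density = cdf_density +
  assumes weighted_density_antimono: "\<And>s t. 0 < s \<Longrightarrow> s \<le> t \<Longrightarrow> (1+t) * f t \<le> (1+s) * f s"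
begin

text \<open>If f vanished at some y > 0 it would vanish beyond y, contradicting the support.\<close>
lemma f_pos: assumes "0 < y" shows "0 < f y"
proof (rule ccontr)
  assume "\<not> 0 < f y"
  then have fy: "f y = 0" using f_nonneg[of y] by auto
  have vanish: "f x = 0" if "y \<le> x" for x
    using weighted_density_antimono[OF assms that] fy f_nonneg[of x] that assms
    by (simp add: mult_le_0_iff)
  have "{x. f x \<noteq> 0} \<subseteq> {0..y}"
  proof
    fix x assume "x \<in> {x. f x \<noteq> 0}"
    then have "\<not> x < 0" "\<not> y \<le> x" using f_neg[of x] vanish[of x] by auto
    then show "x \<in> {0..y}" by simp
  qed
  then have "closure {x. f x \<noteq> 0} \<subseteq> {0..y}"
    by (intro closure_minimal) auto
  then show False using f_support assms by auto
qed

text \<open>The weight 1/(1+t) above c, written relative to the density: wt c t = rate c t * f t.\<close>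
definition rate :: "real \<Rightarrow> real \<Rightarrow> real" where
  "rate c t = (if c < t then 1 / ((1+t) * f t) else 0)"

lemma rate_nonneg: assumes "0 \<le> c" shows "0 \<le> rate c t"
proof (cases "c < t")
  case True
  then have "0 < t" using assms by simp
  then show ?thesis using True f_pos[of t] by (simp add: rate_def)
qed (simp add: rate_def)

lemma rate_mono: assumes "0 \<le> c" "0 < s" "s \<le> t" shows "rate c s \<le> rate c t"
proof (cases "c < s")
  case True
  have "1 / ((1+s) * f s) \<le> 1 / ((1+t) * f t)"
    using weighted_density_antimono[OF assms(2,3)] f_pos[of s] f_pos[of t] assms
    by (intro divide_left_mono) auto
  then show ?thesis using True assms by (simp add: rate_def)
next
  case False then show ?thesis using rate_nonneg[OF assms(1), of t] by (simp add: rate_def)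
qed

lemma wt_eq_rate: "0 < t \<Longrightarrow> wt c t = rate c t * f t"
  using f_pos[of t] by (simp add: wt_def rate_def)

text \<open>A nonnegative profile D living below the level F t0 contributes at most rate c t0 times
  its mass, since the rate is nondecreasing.\<close>
lemma weighted_integral_below:
  assumes c: "0 \<le> c" and D: "\<And>u. 0 \<le> D u" "D \<in> borel_measurable borel" "(D has_integral I) {0..1}"
    and below: "\<And>t. D (F t) \<noteq> 0 \<Longrightarrow> t < t0"
  shows "(\<integral>\<^sup>+t. ennreal (wt c t * D (F t)) \<partial>lborel) \<le> ennreal (rate c t0) * ennreal I"
proof -
  have "wt c t * D (F t) \<le> rate c t0 * (f t * D (F t))" for t
  proof (cases "D (F t) = 0 \<or> t \<le> 0")
    case True then show ?thesis
      using c D(1)[of "F t"] f_nonneg[of t] rate_nonneg[OF c, of t0] by (auto simp: wt_def)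
  next
    case False
    then have "0 < t" "t < t0" using below by auto
    then show ?thesis using rate_mono[OF c, of t t0] wt_eq_rate f_nonneg[of t] D(1)[of "F t"]
      by (simp add: mult_right_mono mult.assoc)
  qed
  then have "(\<integral>\<^sup>+t. ennreal (wt c t * D (F t)) \<partial>lborel) \<le>
               (\<integral>\<^sup>+t. ennreal (rate c t0) * ennreal (f t * D (F t)) \<partial>lborel)"
    using rate_nonneg[OF c] by (intro nn_integral_mono) (simp add: ennreal_leI flip: ennreal_mult')
  also have "\<dots> = ennreal (rate c t0) * ennreal I"
    using D by (simp add: nn_integral_cmult nn_integral_density_F_real)
  finally show ?thesis .
qed

lemma weighted_integral_above:
  assumes c: "0 \<le> c" and D: "\<And>u. 0 \<le> D u" "D \<in> borel_measurable borel" "(D has_integral I) {0..1}"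
    and t0: "0 < t0" and above: "\<And>t. D (F t) \<noteq> 0 \<Longrightarrow> t0 < t"
  shows "ennreal (rate c t0) * ennreal I \<le> (\<integral>\<^sup>+t. ennreal (wt c t * D (F t)) \<partial>lborel)"
proof -
  have "rate c t0 * (f t * D (F t)) \<le> wt c t * D (F t)" for t
  proof (cases "D (F t) = 0")
    case False
    then have "t0 < t" using above by auto
    then show ?thesis using rate_mono[OF c t0, of t] wt_eq_rate[of t] t0 f_nonneg[of t] D(1)[of "F t"]
      by (simp add: mult_right_mono mult.assoc)
  qed simp
  then have "(\<integral>\<^sup>+t. ennreal (rate c t0) * ennreal (f t * D (F t)) \<partial>lborel) \<le>
               (\<integral>\<^sup>+t. ennreal (wt c t * D (F t)) \<partial>lborel)"
    using rate_nonneg[OF c] by (intro nn_integral_mono) (simp add: ennreal_leI flip: ennreal_mult')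
  moreover have "(\<integral>\<^sup>+t. ennreal (rate c t0) * ennreal (f t * D (F t)) \<partial>lborel) = ennreal (rate c t0) * ennreal I"
    using D by (simp add: nn_integral_cmult nn_integral_density_F_real)
  ultimately show ?thesis by simp
qed

lemma tail_integral_mono:
  assumes c: "0 \<le> c" and h: "0 \<le> a1" "a1 \<le> a2" "a2 \<le> b2" "b2 \<le> b1" "b1 \<le> 1" "a2 - a1 = b1 - b2"
  shows "(\<integral>\<^sup>+t. ennreal (wt c t * (1 - phi a1 b1 (F t))) \<partial>lborel) \<le>
         (\<integral>\<^sup>+t. ennreal (wt c t * (1 - phi a2 b2 (F t))) \<partial>lborel)"
proof (cases "a1 = a2")
  case True
  then show ?thesis using h by simp
next
  case False
  then have pos: "0 < b1" "0 < b2" using h by auto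
  define u0 where "u0 = a2 * b2 / b1"
  have "0 < u0" "u0 \<le> a2" using h pos False by (auto simp: u0_def divide_le_eq mult_left_mono)
  then have "0 \<le> u0" "u0 < 1" using h False by auto
  define t0 where "t0 = Finv F u0"
  have Ft0: "F t0 = u0" using Finv(2)[OF \<open>0 \<le> u0\<close> \<open>u0 < 1\<close>] by (simp add: t0_def)
  have t0: "0 < t0" using Finv(1)[OF \<open>0 \<le> u0\<close> \<open>u0 < 1\<close>] Ft0 F_nonpos[of 0] \<open>0 < u0\<close>
    by (cases "t0 = 0") (auto simp: t0_def)
  define Dn where "Dn = (\<lambda>u. max 0 (phi a2 b2 u - phi a1 b1 u))"
  define Dp where "Dp = (\<lambda>u. max 0 (phi a1 b1 u - phi a2 b2 u))"
  have cont: "continuous_on S Dn" "continuous_on S Dp" for S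
    unfolding Dn_def Dp_def by (intro continuous_intros phi_cont)+
  then have [measurable]: "Dn \<in> borel_measurable borel" "Dp \<in> borel_measurable borel"
    by (simp_all add: borel_measurable_continuous_onI)
  have int: "(Dn has_integral integral {0..1} Dn) {0..1}" "(Dp has_integral integral {0..1} Dp) {0..1}"
    using cont by (simp_all add: integrable_integral integrable_continuous_real)
  have Dn_below: "t < t0" if "Dn (F t) \<noteq> 0" for t
  proof (rule ccontr)
    assume "\<not> t < t0"
    then have "u0 \<le> F t" using F_mono[of t0 t] Ft0 by simp
    then have "phi a2 b2 (F t) \<le> phi a1 b1 (F t)"
      using phi_single_crossing(2)[OF h(1-4) pos(1) h(6) F_nonneg] by (simp add: u0_def)
    then show False using that by (simp add: Dn_def)
  qed
  have Dp_above: "t0 < t" if "Dp (F t) \<noteq> 0" for t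
  proof (rule ccontr)
    assume "\<not> t0 < t"
    then have "F t \<le> u0" using F_mono[of t t0] Ft0 by simp
    then have "phi a1 b1 (F t) \<le> phi a2 b2 (F t)"
      using phi_single_crossing(1)[OF h(1-4) pos(1) h(6) F_nonneg] by (simp add: u0_def)
    then show False using that by (simp add: Dp_def)
  qed
  let ?X1 = "\<integral>\<^sup>+t. ennreal (wt c t * (1 - phi a1 b1 (F t))) \<partial>lborel"
  let ?X2 = "\<integral>\<^sup>+t. ennreal (wt c t * (1 - phi a2 b2 (F t))) \<partial>lborel"
  let ?Yn = "\<integral>\<^sup>+t. ennreal (wt c t * Dn (F t)) \<partial>lborel"
  let ?Yp = "\<integral>\<^sup>+t. ennreal (wt c t * Dp (F t)) \<partial>lborel"
  have Yn: "?Yn \<le> ennreal (rate c t0) * ennreal (integral {0..1} Dn)"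
    by (rule weighted_integral_below[OF c _ _ int(1) Dn_below]) (auto simp: Dn_def)
  have Yp: "ennreal (rate c t0) * ennreal (integral {0..1} Dp) \<le> ?Yp"
    by (rule weighted_integral_above[OF c _ _ int(2) t0 Dp_above]) (auto simp: Dp_def)
  have "integral {0..1} Dn \<le> integral {0..1} Dp"
    using phi_neg_part_le_pos_part[OF h] by (simp only: Dn_def Dp_def)
  then have "ennreal (rate c t0) * ennreal (integral {0..1} Dn) \<le> ennreal (rate c t0) * ennreal (integral {0..1} Dp)"
    by (intro mult_left_mono ennreal_leI) simp_all
  then have YnYp: "?Yn \<le> ?Yp" using Yn Yp by (meson order_trans)
  have "ennreal (rate c t0) * ennreal (integral {0..1} Dn) < \<infinity>"
    by (simp add: ennreal_mult_less_top)
  then have Yn_finite: "?Yn \<noteq> \<infinity>" using Yn by (auto simp: top_unique)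
  have "?X2 + ?Yn = ?X1 + ?Yp"
  proof -
    have "?X2 + ?Yn = (\<integral>\<^sup>+t. ennreal (wt c t * (1 - phi a2 b2 (F t))) + ennreal (wt c t * Dn (F t)) \<partial>lborel)"
      by (rule nn_integral_add[symmetric]) auto
    also have "\<dots> = (\<integral>\<^sup>+t. ennreal (wt c t * (1 - phi a1 b1 (F t))) + ennreal (wt c t * Dp (F t)) \<partial>lborel)"
    proof (intro nn_integral_cong)
      fix t
      have "wt c t * (1 - phi a2 b2 (F t)) + wt c t * Dn (F t) = wt c t * (1 - phi a1 b1 (F t)) + wt c t * Dp (F t)"
        by (simp add: Dn_def Dp_def max_def algebra_simps)
      moreover have "0 \<le> wt c t * (1 - phi a2 b2 (F t))" "0 \<le> wt c t * Dn (F t)"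
          "0 \<le> wt c t * (1 - phi a1 b1 (F t))" "0 \<le> wt c t * Dp (F t)"
        using wt_nonneg[OF c, of t] phi_bounds[of a1 b1 "F t"] phi_bounds[of a2 b2 "F t"]
          h F_nonneg[of t] F_le1[of t] by (auto simp: Dn_def Dp_def)
      ultimately show "ennreal (wt c t * (1 - phi a2 b2 (F t))) + ennreal (wt c t * Dn (F t)) =
            ennreal (wt c t * (1 - phi a1 b1 (F t))) + ennreal (wt c t * Dp (F t))"
        by (simp flip: ennreal_plus)
    qed
    also have "\<dots> = ?X1 + ?Yp"
      by (rule nn_integral_add) auto
    finally show ?thesis .
  qed
  then have "?Yn + ?X1 \<le> ?Yn + ?X2"
    using add_right_mono[OF YnYp, of ?X1] by (simp add: add.commute)
  then show ?thesis using Yn_finite by (simp add: ennreal_add_left_cancel_le)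
qed

end

theorem lemma5:
  fixes F f :: "real \<Rightarrow> real" and lam c :: real
  assumes f_nonneg: "\<And>x. 0 \<le> f x"
    and f_neg: "\<And>x. x < 0 \<Longrightarrow> f x = 0"
    and F_density: "\<And>x. (f has_integral F x) {..x}"
    and F_cont: "continuous_on UNIV F"
    and F_lim: "(F \<longlongrightarrow> 1) at_top"
    and f_support: "closure {x. f x \<noteq> 0} = {0..}"
    and f_bdd0: "\<exists>e>0. \<exists>B. \<forall>x. \<bar>x\<bar> < e \<longrightarrow> \<bar>f x\<bar> \<le> B"
    and f_diff: "\<And>x. 0 < x \<Longrightarrow> f differentiable (at x)"
    and f_cond: "\<And>x. 0 < x \<Longrightarrow> x < 1 \<Longrightarrow>
                   deriv f (Finv F x) \<le> - f (Finv F x) / (1 + Finv F x)"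
    and lam: "0 < lam" "lam \<le> 2"
    and c: "0 \<le> c"
  shows "mono_on {max 0 (lam - 1) .. lam / 2} (Psi F f lam c)"
proof -
  interpret cdf_density F f
  proof
    show "isCont f x" if "0 < x" for x
      using f_diff[OF that] differentiable_imp_continuous_within by blast
  qed (fact f_nonneg f_neg F_density F_cont F_lim f_support)+
  interpret weighted_density F f
    by unfold_locales (rule weighted_density_antimono_of_deriv[OF f_diff f_cond])
  show ?thesis
  proof (rule mono_onI)
    fix r s assume r: "r \<in> {max 0 (lam - 1) .. lam / 2}" and s: "s \<in> {max 0 (lam - 1) .. lam / 2}"
      and "r \<le> s"
    then have "(\<integral>\<^sup>+t. ennreal (wt c t * (1 - phi (1-lam+r) (1-r) (F t))) \<partial>lborel) \<le>
               (\<integral>\<^sup>+t. ennreal (wt c t * (1 - phi (1-lam+s) (1-s) (F t))) \<partial>lborel)"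
      using lam by (intro tail_integral_mono c) auto
    then show "Psi F f lam c r \<le> Psi F f lam c s"
      using Psi_formula[OF lam c] r s by (simp add: add_left_mono)
  qed
qed

end
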